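(* Let $V$ be a finite nonempty set of voters and $A$ a finite set of alternatives with $|A|\ge 4$. Let $F:\mathcal{P}(V,A)\to S_2(A)$ be a consular election rule that is Marian, satisfies SPO and SPP, and is weakly viable. Then $F$ has a weak dictator, i.e. a voter $i$ such that for every profile $P$, the top-ranked alternative of $P_i$ belongs to $F(P)$.
   Context: A profile assigns to each voter $i\in V$ a linear order $P_i$ on $A$; $P_i'P_{-i}$ replaces voter $i$'s order by $P_i'$. $S_2(A)$ is the set of 2-element subsets of $A$; a consular election rule is a map $F:\mathcal{P}(V,A)\to S_2(A)$. $\mathrm{best}(P_i,W)$, $\mathrm{worst}(P_i,W)$ denote the $P_i$-best and $P_i$-worst elements of nonempty $W\subseteq A$. SPO: for all profiles $P$, voters $i$ and linear orders $P_i'$, $\mathrm{best}(P_i,F(P))\succeq_i\mathrm{best}(P_i,F(P_i'P_{-i}))$; SPP: same with $\mathrm{worst}$. Weakly viable: every $a\in A$ lies in $F(P)$ for some $P$. $F$ is Marian if there is $m\in A$ with $m\in F(P)$ for every profile $P$. *)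

theory Defs
  imports Main "HOL-Library.FuncSet"
begin

text \<open>A linear order on A is a relation r \<subseteq> A \<times> A; (x,y) \<in> r means "x is ranked weakly above y".\<close>

definition lin_orders :: "'a set \<Rightarrow> ('a \<times> 'a) set set" where
  "lin_orders A = {r. linear_order_on A r \<and> r \<subseteq> A \<times> A}"

definition profiles :: "'v set \<Rightarrow> 'a set \<Rightarrow> ('v \<Rightarrow> ('a \<times> 'a) set) set" where
  "profiles V A = V \<rightarrow>\<^sub>E lin_orders A"

definition best :: "('a \<times> 'a) set \<Rightarrow> 'a set \<Rightarrow> 'a" where
  "best r W = (THE x. x \<in> W \<and> (\<forall>y\<in>W. (x, y) \<in> r))"

definition worst :: "('a \<times> 'a) set \<Rightarrow> 'a set \<Rightarrow> 'a" where
  "worst r W = (THE x. x \<in> W \<and> (\<forall>y\<in>W. (y, x) \<in> r))"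

definition consular_rule :: "'v set \<Rightarrow> 'a set \<Rightarrow> (('v \<Rightarrow> ('a \<times> 'a) set) \<Rightarrow> 'a set) \<Rightarrow> bool" where
  "consular_rule V A F = (\<forall>P\<in>profiles V A. F P \<subseteq> A \<and> card (F P) = 2)"

definition SPO :: "'v set \<Rightarrow> 'a set \<Rightarrow> (('v \<Rightarrow> ('a \<times> 'a) set) \<Rightarrow> 'a set) \<Rightarrow> bool" where
  "SPO V A F = (\<forall>P\<in>profiles V A. \<forall>i\<in>V. \<forall>r'\<in>lin_orders A.
      (best (P i) (F P), best (P i) (F (P(i := r')))) \<in> P i)"

definition SPP :: "'v set \<Rightarrow> 'a set \<Rightarrow> (('v \<Rightarrow> ('a \<times> 'a) set) \<Rightarrow> 'a set) \<Rightarrow> bool" where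
  "SPP V A F = (\<forall>P\<in>profiles V A. \<forall>i\<in>V. \<forall>r'\<in>lin_orders A.
      (worst (P i) (F P), worst (P i) (F (P(i := r')))) \<in> P i)"

definition weakly_viable :: "'v set \<Rightarrow> 'a set \<Rightarrow> (('v \<Rightarrow> ('a \<times> 'a) set) \<Rightarrow> 'a set) \<Rightarrow> bool" where
  "weakly_viable V A F = (\<forall>a\<in>A. \<exists>P\<in>profiles V A. a \<in> F P)"

definition marian :: "'v set \<Rightarrow> 'a set \<Rightarrow> (('v \<Rightarrow> ('a \<times> 'a) set) \<Rightarrow> 'a set) \<Rightarrow> bool" where
  "marian V A F = (\<exists>m\<in>A. \<forall>P\<in>profiles V A. m \<in> F P)"

definition weak_dictator :: "'v set \<Rightarrow> 'a set \<Rightarrow> (('v \<Rightarrow> ('a \<times> 'a) set) \<Rightarrow> 'a set) \<Rightarrow> 'v \<Rightarrow> bool" where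
  "weak_dictator V A F i = (i \<in> V \<and> (\<forall>P\<in>profiles V A. best (P i) A \<in> F P))"

end

theory Submission
  imports Defs
begin

text \<open>
  Let \<open>m\<close> be the Marian candidate and \<open>g P\<close> the second consul, so \<open>F P = {m, g P}\<close>.
  For a voter who ranks \<open>g P\<close> above \<open>m\<close>, SPO says she cannot obtain a better second consul;
  for one who ranks it below \<open>m\<close>, SPP says the same. Hence \<open>g\<close> is a strategy-proof social
  choice function onto \<open>A - {m}\<close>, which has at least three elements, and by the
  Gibbard--Satterthwaite theorem it has a dictator. The dictator's top alternative is either
  \<open>m\<close> or, being her best element of \<open>A - {m}\<close>, equal to \<open>g P\<close>.
\<close>

section \<open>Linear orders and profiles\<close>

lemma lin_ordersD:
  assumes "r \<in> lin_orders A"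
  shows "r \<subseteq> A \<times> A" "\<And>x. x \<in> A \<Longrightarrow> (x, x) \<in> r"
    "\<And>x y z. (x, y) \<in> r \<Longrightarrow> (y, z) \<in> r \<Longrightarrow> (x, z) \<in> r"
    "\<And>x y. (x, y) \<in> r \<Longrightarrow> (y, x) \<in> r \<Longrightarrow> x = y"
    "\<And>x y. x \<in> A \<Longrightarrow> y \<in> A \<Longrightarrow> (x, y) \<in> r \<or> (y, x) \<in> r"
proof -
  have "r \<subseteq> A \<times> A" and rf: "refl_on A r" and tr: "trans r" and an: "antisym r"
    and tot: "total_on A r"
    using assms unfolding lin_orders_def linear_order_on_def partial_order_on_def
      preorder_on_def by auto
  then show "r \<subseteq> A \<times> A" "\<And>x. x \<in> A \<Longrightarrow> (x, x) \<in> r"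
    "\<And>x y z. (x, y) \<in> r \<Longrightarrow> (y, z) \<in> r \<Longrightarrow> (x, z) \<in> r"
    "\<And>x y. (x, y) \<in> r \<Longrightarrow> (y, x) \<in> r \<Longrightarrow> x = y"
    by (auto dest: refl_onD transD antisymD)
  show "(x, y) \<in> r \<or> (y, x) \<in> r" if "x \<in> A" "y \<in> A" for x y
    using tot rf that unfolding total_on_def refl_on_def by (cases "x = y") auto
qed

lemma lin_ordersI:
  assumes "r \<subseteq> A \<times> A" "\<And>x. x \<in> A \<Longrightarrow> (x, x) \<in> r"
    "\<And>x y z. (x, y) \<in> r \<Longrightarrow> (y, z) \<in> r \<Longrightarrow> (x, z) \<in> r"
    "\<And>x y. (x, y) \<in> r \<Longrightarrow> (y, x) \<in> r \<Longrightarrow> x = y"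
    "\<And>x y. x \<in> A \<Longrightarrow> y \<in> A \<Longrightarrow> x \<noteq> y \<Longrightarrow> (x, y) \<in> r \<or> (y, x) \<in> r"
  shows "r \<in> lin_orders A"
proof -
  have "refl_on A r" "trans r" "antisym r" "total_on A r"
    using assms by (auto simp: refl_on_def total_on_def intro: transI antisymI)
  with assms(1) show ?thesis
    unfolding lin_orders_def linear_order_on_def partial_order_on_def preorder_on_def by blast
qed

lemma lin_orders_antisym_total:
  assumes "r \<in> lin_orders A" "x \<in> A" "y \<in> A" "x \<noteq> y"
  shows "(x, y) \<notin> r \<longleftrightarrow> (y, x) \<in> r"
  using lin_ordersD(4,5)[OF assms(1)] assms(2-4) by blast

definition move_to_top :: "'a set \<Rightarrow> 'a \<Rightarrow> ('a \<times> 'a) set \<Rightarrow> ('a \<times> 'a) set" where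
  "move_to_top A x r = {p \<in> r. fst p \<noteq> x \<and> snd p \<noteq> x} \<union> {(x, v) | v. v \<in> A}"

lemma move_to_top_iff:
  "(u, v) \<in> move_to_top A x r \<longleftrightarrow> (u = x \<and> v \<in> A) \<or> (u \<noteq> x \<and> v \<noteq> x \<and> (u, v) \<in> r)"
  unfolding move_to_top_def by auto

lemma move_to_top_in_lin_orders:
  assumes r: "r \<in> lin_orders A" and x: "x \<in> A"
  shows "move_to_top A x r \<in> lin_orders A"
proof (rule lin_ordersI)
  note D = lin_ordersD[OF r]
  show "move_to_top A x r \<subseteq> A \<times> A" using D(1) x by (auto simp: move_to_top_def)
  show "(y, y) \<in> move_to_top A x r" if "y \<in> A" for y
    using D(2) that by (simp add: move_to_top_iff)
  show "(u, w) \<in> move_to_top A x r"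
    if "(u, v) \<in> move_to_top A x r" "(v, w) \<in> move_to_top A x r" for u v w
    using that D(1,3) by (auto simp: move_to_top_iff)
  show "u = v" if "(u, v) \<in> move_to_top A x r" "(v, u) \<in> move_to_top A x r" for u v
    using that D(4) by (auto simp: move_to_top_iff)
  show "(u, v) \<in> move_to_top A x r \<or> (v, u) \<in> move_to_top A x r"
    if "u \<in> A" "v \<in> A" "u \<noteq> v" for u v
    using that D(5) by (auto simp: move_to_top_iff)
qed

lemma best_pair:
  assumes r: "r \<in> lin_orders A" and "x \<in> A" "(x, y) \<in> r"
  shows "best r {x, y} = x"
  unfolding best_def
  using assms lin_ordersD(2,4)[OF r] by (intro the_equality) auto

lemma worst_pair:
  assumes r: "r \<in> lin_orders A" and "y \<in> A" "(x, y) \<in> r"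
  shows "worst r {x, y} = y"
  unfolding worst_def
  using assms lin_ordersD(2,4)[OF r] by (intro the_equality) auto

lemma best_greatest:
  assumes r: "r \<in> lin_orders A" and "finite W" "W \<noteq> {}" "W \<subseteq> A"
  shows "best r W \<in> W" "\<And>y. y \<in> W \<Longrightarrow> (best r W, y) \<in> r"
proof -
  have "\<exists>x\<in>W. \<forall>y\<in>W. (x, y) \<in> r"
    using assms(2-4)
  proof (induction W rule: finite_ne_induct)
    case (singleton x)
    then show ?case using lin_ordersD(2)[OF r] by auto
  next
    case (insert x W)
    then obtain z where z: "z \<in> W" "\<forall>y\<in>W. (z, y) \<in> r" by auto
    then show ?case
      using lin_ordersD(2,3,5)[OF r] insert.prems by (cases "(x, z) \<in> r") blast+
  qed
  then obtain x where x: "x \<in> W" "\<forall>y\<in>W. (x, y) \<in> r" by blast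
  have "best r W = x"
    unfolding best_def using x lin_ordersD(4)[OF r] by (intro the_equality) auto
  with x show "best r W \<in> W" "\<And>y. y \<in> W \<Longrightarrow> (best r W, y) \<in> r" by auto
qed

lemma best_in_insert_if_dominates:
  assumes r: "r \<in> lin_orders A" and "finite A" "x \<in> A" "\<forall>y\<in>A - {m}. (x, y) \<in> r"
  shows "best r A \<in> {m, x}"
proof -
  have "best r A \<in> A" "(best r A, x) \<in> r"
    using best_greatest[OF r] assms(2,3) by auto
  then show ?thesis using assms(4) lin_ordersD(4)[OF r] by blast
qed

lemma profiles_iff:
  "P \<in> profiles V A \<longleftrightarrow> (\<forall>i\<in>V. P i \<in> lin_orders A) \<and> (\<forall>i. i \<notin> V \<longrightarrow> P i = undefined)"
  unfolding profiles_def PiE_def extensional_def Pi_def by auto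

lemma profile_in_lin_orders: "P \<in> profiles V A \<Longrightarrow> i \<in> V \<Longrightarrow> P i \<in> lin_orders A"
  by (simp add: profiles_iff)

lemma profiles_update:
  "P \<in> profiles V A \<Longrightarrow> i \<in> V \<Longrightarrow> r \<in> lin_orders A \<Longrightarrow> P(i := r) \<in> profiles V A"
  by (simp add: profiles_iff)

definition top3 :: "'a set \<Rightarrow> 'a \<Rightarrow> 'a \<Rightarrow> 'a \<Rightarrow> ('a \<times> 'a) set \<Rightarrow> ('a \<times> 'a) set" where
  "top3 A x y z r = move_to_top A x (move_to_top A y (move_to_top A z r))"

lemma top3_in_lin_orders:
  "r \<in> lin_orders A \<Longrightarrow> x \<in> A \<Longrightarrow> y \<in> A \<Longrightarrow> z \<in> A \<Longrightarrow> top3 A x y z r \<in> lin_orders A"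
  unfolding top3_def by (intro move_to_top_in_lin_orders) auto

section \<open>The Gibbard--Satterthwaite theorem\<close>

locale strategyproof_scf =
  fixes V :: "'v set" and A :: "'a set" and B :: "'a set"
    and g :: "('v \<Rightarrow> ('a \<times> 'a) set) \<Rightarrow> 'a"
  assumes finite_voters: "finite V" and range_subset: "B \<subseteq> A" and card_range: "card B \<ge> 3"
    and g_in_range: "\<And>P. P \<in> profiles V A \<Longrightarrow> g P \<in> B"
    and g_onto: "\<And>b. b \<in> B \<Longrightarrow> \<exists>P\<in>profiles V A. g P = b"
    and strategyproof: "\<And>P i r. P \<in> profiles V A \<Longrightarrow> i \<in> V \<Longrightarrow> r \<in> lin_orders A \<Longrightarrow>
      (g P, g (P(i := r))) \<in> P i"
begin

lemma third_alternative:
  assumes "a \<in> B" "b \<in> B"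
  obtains c where "c \<in> B" "c \<noteq> a" "c \<noteq> b"
proof -
  have "\<not> B \<subseteq> {a, b}"
  proof
    assume "B \<subseteq> {a, b}"
    then have "card B \<le> card {a, b}" by (simp add: card_mono)
    also have "\<dots> \<le> 2" by (simp add: card_insert_if)
    finally show False using card_range by simp
  qed
  then show ?thesis using that by blast
qed

lemma two_alternatives: obtains a b where "a \<in> B" "b \<in> B" "a \<noteq> b"
proof -
  from card_range obtain a where "a \<in> B" by fastforce
  then show ?thesis using that third_alternative by metis
qed

lemma profile_exists: obtains P where "P \<in> profiles V A"
  using two_alternatives g_onto by metis

lemma monotone_single_voter:
  assumes Q: "Q \<in> profiles V A" and i: "i \<in> V" and r: "r \<in> lin_orders A"
    and not_lowered: "\<forall>y\<in>B. (g Q, y) \<in> Q i \<longrightarrow> (g Q, y) \<in> r"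
  shows "g (Q(i := r)) = g Q"
proof -
  have Q': "Q(i := r) \<in> profiles V A" using Q i r by (rule profiles_update)
  have "(g Q, g (Q(i := r))) \<in> r"
    using strategyproof[OF Q i r] not_lowered g_in_range[OF Q'] by blast
  moreover have "(g (Q(i := r)), g Q) \<in> r"
    using strategyproof[OF Q' i profile_in_lin_orders[OF Q i]] by simp
  ultimately show ?thesis using lin_ordersD(4)[OF r] by blast
qed

lemma maskin_monotone:
  assumes P: "P \<in> profiles V A" and P': "P' \<in> profiles V A"
    and not_lowered: "\<forall>i\<in>V. \<forall>y\<in>B. (g P, y) \<in> P i \<longrightarrow> (g P, y) \<in> P' i"
  shows "g P' = g P"
proof -
  have "g (\<lambda>j. if j \<in> S then P' j else P j) = g P" if "finite S" "S \<subseteq> V" for S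
    using that
  proof (induction S rule: finite_induct)
    case (insert j S)
    let ?H = "\<lambda>j. if j \<in> S then P' j else P j"
    have H: "?H \<in> profiles V A" using P P' insert.prems by (auto simp: profiles_iff)
    have "(\<lambda>k. if k \<in> insert j S then P' k else P k) = ?H(j := P' j)"
      by (auto simp: fun_eq_iff)
    moreover have "g (?H(j := P' j)) = g ?H"
      using insert P' not_lowered
      by (intro monotone_single_voter[OF H]) (auto simp: profiles_iff)
    ultimately show ?case using insert by simp
  qed simp
  moreover have "(\<lambda>j. if j \<in> V then P' j else P j) = P'"
    using P P' by (auto simp: profiles_iff fun_eq_iff)
  ultimately show ?thesis using finite_voters by force
qed

definition decisive_for :: "'v set \<Rightarrow> 'a \<Rightarrow> 'a \<Rightarrow> bool" where
  "decisive_for S a b \<longleftrightarrow> (\<forall>P\<in>profiles V A. (\<forall>i\<in>S. (a, b) \<in> P i) \<longrightarrow> g P \<noteq> b)"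

definition decisive :: "'v set \<Rightarrow> bool" where
  "decisive S \<longleftrightarrow> (\<forall>x\<in>B. \<forall>y\<in>B. x \<noteq> y \<longrightarrow> decisive_for S x y)"

text \<open>
  Suppose \<open>S\<close> ranks \<open>a\<close> over \<open>b\<close> in \<open>P\<close> and \<open>g P = b\<close>. Moving \<open>a\<close> and \<open>b\<close> to the top of all
  orders (in the order of \<open>P\<close>) gives a profile with outcome \<open>b\<close> by monotonicity from \<open>P\<close>,
  and with outcome \<open>a\<close> by monotonicity from \<open>Q\<close>.
\<close>

lemma decisive_forI:
  assumes a: "a \<in> B" and b: "b \<in> B" and ab: "a \<noteq> b" and Q: "Q \<in> profiles V A"
    and ga: "g Q = a" and others: "\<forall>i\<in>V - S. (b, a) \<in> Q i"
  shows "decisive_for S a b"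
  unfolding decisive_for_def
proof (intro ballI impI notI)
  fix P assume P: "P \<in> profiles V A" and PS: "\<forall>i\<in>S. (a, b) \<in> P i" and gb: "g P = b"
  have aA: "a \<in> A" and bA: "b \<in> A" using a b range_subset by auto
  define R where "R = (\<lambda>i\<in>V. if (a, b) \<in> P i then move_to_top A a (move_to_top A b (P i))
    else move_to_top A b (move_to_top A a (P i)))"
  have R: "R \<in> profiles V A"
    using P aA bA by (auto simp: profiles_iff R_def intro!: move_to_top_in_lin_orders)
  have "g R = b"
  proof -
    have "(b, y) \<in> R i" if "i \<in> V" "y \<in> B" "(b, y) \<in> P i" for i y
      using lin_ordersD(4)[OF profile_in_lin_orders[OF P \<open>i \<in> V\<close>]] ab that range_subset
      by (auto simp: R_def move_to_top_iff)
    then show ?thesis using maskin_monotone[OF P R] gb by auto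
  qed
  moreover have "g R = a"
  proof -
    have "(a, y) \<in> R i" if i: "i \<in> V" and y: "y \<in> B" and ay: "(a, y) \<in> Q i" for i y
    proof (cases "(a, b) \<in> P i")
      case True
      then show ?thesis using i y range_subset by (auto simp: R_def move_to_top_iff)
    next
      case False
      then have "(b, a) \<in> Q i" using PS i others by auto
      then have "y \<noteq> b" using ay ab lin_ordersD(4)[OF profile_in_lin_orders[OF Q i]] by auto
      then show ?thesis using False i y range_subset by (auto simp: R_def move_to_top_iff)
    qed
    then show ?thesis using maskin_monotone[OF Q R] ga by auto
  qed
  ultimately show False using ab by simp
qed

lemma decisive_for_all_voters:
  assumes "x \<in> B" "y \<in> B" "x \<noteq> y"
  shows "decisive_for V x y"
proof -
  obtain Q where "Q \<in> profiles V A" "g Q = x" using g_onto assms(1) by auto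
  then show ?thesis using decisive_forI[OF assms] by auto
qed

text \<open>
  In the profile below the coalition's decisiveness for \<open>a\<close> over \<open>b\<close> excludes \<open>b\<close>, and unanimity
  excludes everything but \<open>a\<close>; the voters outside \<open>S\<close> rank \<open>c\<close> over \<open>a\<close>.
\<close>

lemma decisive_for_change_loser:
  assumes D: "decisive_for S a b" and SV: "S \<subseteq> V" and B3: "a \<in> B" "b \<in> B" "c \<in> B"
    and d: "a \<noteq> b" "a \<noteq> c" "b \<noteq> c"
  shows "decisive_for S a c"
proof -
  obtain P0 where P0: "P0 \<in> profiles V A" using profile_exists .
  have A3: "a \<in> A" "b \<in> A" "c \<in> A" using B3 range_subset by auto
  define Q where "Q = (\<lambda>i\<in>V. if i \<in> S then top3 A a b c (P0 i) else top3 A b c a (P0 i))"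
  have Q: "Q \<in> profiles V A"
    using P0 A3 by (auto simp: profiles_iff Q_def intro!: top3_in_lin_orders)
  have gQ: "g Q \<in> B" using g_in_range[OF Q] .
  have "\<forall>i\<in>S. (a, b) \<in> Q i"
    using SV A3 d by (auto simp: Q_def top3_def move_to_top_iff)
  then have "g Q \<noteq> b" using D Q by (auto simp: decisive_for_def)
  moreover have "g Q = a" if "g Q \<noteq> b"
  proof (rule ccontr)
    assume "g Q \<noteq> a"
    then have "\<forall>i\<in>V. (b, g Q) \<in> Q i"
      using A3 d gQ range_subset that by (auto simp: Q_def top3_def move_to_top_iff)
    then show False using decisive_for_all_voters[OF B3(2) gQ] that Q
      by (auto simp: decisive_for_def)
  qed
  moreover have "\<forall>i\<in>V - S. (c, a) \<in> Q i"
    using A3 d by (auto simp: Q_def top3_def move_to_top_iff)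
  ultimately show ?thesis using decisive_forI[OF B3(1,3) d(2) Q] by auto
qed

lemma decisive_for_change_winner:
  assumes D: "decisive_for S a b" and SV: "S \<subseteq> V" and B3: "a \<in> B" "b \<in> B" "c \<in> B"
    and d: "a \<noteq> b" "a \<noteq> c" "b \<noteq> c"
  shows "decisive_for S c b"
proof -
  obtain P0 where P0: "P0 \<in> profiles V A" using profile_exists .
  have A3: "a \<in> A" "b \<in> A" "c \<in> A" using B3 range_subset by auto
  define Q where "Q = (\<lambda>i\<in>V. if i \<in> S then top3 A c a b (P0 i) else top3 A b c a (P0 i))"
  have Q: "Q \<in> profiles V A"
    using P0 A3 by (auto simp: profiles_iff Q_def intro!: top3_in_lin_orders)
  have gQ: "g Q \<in> B" using g_in_range[OF Q] .
  have "\<forall>i\<in>S. (a, b) \<in> Q i"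
    using SV A3 d by (auto simp: Q_def top3_def move_to_top_iff)
  then have "g Q \<noteq> b" using D Q by (auto simp: decisive_for_def)
  moreover have "g Q = c" if "g Q \<noteq> b"
  proof (rule ccontr)
    assume "g Q \<noteq> c"
    then have "\<forall>i\<in>V. (c, g Q) \<in> Q i"
      using A3 d gQ range_subset that by (auto simp: Q_def top3_def move_to_top_iff)
    then show False using decisive_for_all_voters[OF B3(3) gQ] \<open>g Q \<noteq> c\<close> Q
      by (auto simp: decisive_for_def)
  qed
  moreover have "\<forall>i\<in>V - S. (b, c) \<in> Q i"
    using A3 d by (auto simp: Q_def top3_def move_to_top_iff)
  ultimately show ?thesis using decisive_forI[OF B3(3,2) _ Q] d by auto
qed

lemma decisive_for_imp_decisive:
  assumes D: "decisive_for S a b" and SV: "S \<subseteq> V" and a: "a \<in> B" and b: "b \<in> B"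
    and ab: "a \<noteq> b"
  shows "decisive S"
  unfolding decisive_def
proof (intro ballI impI)
  fix x y assume x: "x \<in> B" and y: "y \<in> B" and xy: "x \<noteq> y"
  note loser = decisive_for_change_loser[OF _ SV] and winner = decisive_for_change_winner[OF _ SV]
  have from_a: "decisive_for S a z" if "z \<in> B" "z \<noteq> a" for z
    using that loser[OF D a b, of z] ab D by (cases "z = b") auto
  show "decisive_for S x y"
  proof (cases "y = a")
    case False
    then show ?thesis
      using from_a[OF y] winner[OF _ a y x] xy by (cases "x = a") auto
  next
    case True
    show ?thesis
    proof (cases "x = b")
      case False
      then show ?thesis using winner[OF D a b x] loser[OF _ x b y] xy True ab by auto
    next
      case True
      obtain c where c: "c \<in> B" "c \<noteq> a" "c \<noteq> b" using third_alternative[OF a b] .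
      then have "decisive_for S b c" using winner[OF from_a a _ b] ab by auto
      then show ?thesis using loser[OF _ b c(1) a] c ab True \<open>y = a\<close> by auto
    qed
  qed
qed

lemma decisive_Un_imp:
  assumes D: "decisive (S1 \<union> S2)" and SV: "S1 \<union> S2 \<subseteq> V"
  shows "decisive S1 \<or> decisive S2"
proof -
  obtain a b where ab: "a \<in> B" "b \<in> B" "a \<noteq> b" using two_alternatives .
  obtain c where c: "c \<in> B" "c \<noteq> a" "c \<noteq> b" using third_alternative[OF ab(1,2)] .
  obtain P0 where P0: "P0 \<in> profiles V A" using profile_exists .
  have A3: "a \<in> A" "b \<in> A" "c \<in> A" using ab c range_subset by auto
  define Q where "Q = (\<lambda>i\<in>V. if i \<in> S1 then top3 A a b c (P0 i) else
     if i \<in> S2 then top3 A c a b (P0 i) else top3 A b c a (P0 i))"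
  have Q: "Q \<in> profiles V A"
    using P0 A3 by (auto simp: profiles_iff Q_def intro!: top3_in_lin_orders)
  have gQ: "g Q \<in> B" using g_in_range[OF Q] .
  have "\<forall>i\<in>S1 \<union> S2. (a, b) \<in> Q i"
    using SV A3 ab c by (auto simp: Q_def top3_def move_to_top_iff)
  then have "g Q \<noteq> b" using D ab Q by (auto simp: decisive_def decisive_for_def)
  have "g Q = a \<or> g Q = c"
  proof (rule ccontr)
    assume "\<not> (g Q = a \<or> g Q = c)"
    then have "\<forall>i\<in>V. (a, g Q) \<in> Q i"
      using A3 ab c gQ range_subset \<open>g Q \<noteq> b\<close> by (auto simp: Q_def top3_def move_to_top_iff)
    then show False
      using decisive_for_all_voters[OF ab(1) gQ] \<open>\<not> (g Q = a \<or> g Q = c)\<close> Q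
      by (auto simp: decisive_for_def)
  qed
  then show ?thesis
  proof
    assume "g Q = a"
    moreover have "\<forall>i\<in>V - S1. (c, a) \<in> Q i"
      using A3 ab c by (auto simp: Q_def top3_def move_to_top_iff)
    ultimately have "decisive_for S1 a c" using decisive_forI[OF ab(1) c(1) _ Q] c by auto
    then show ?thesis using decisive_for_imp_decisive[of S1 a c] SV ab c by auto
  next
    assume "g Q = c"
    moreover have "\<forall>i\<in>V - S2. (b, c) \<in> Q i"
      using A3 ab c by (auto simp: Q_def top3_def move_to_top_iff)
    ultimately have "decisive_for S2 c b" using decisive_forI[OF c(1) ab(2) _ Q] c by auto
    then show ?thesis using decisive_for_imp_decisive[of S2 c b] SV ab c by auto
  qed
qed

lemma not_decisive_empty: "\<not> decisive {}"
proof
  assume D: "decisive {}"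
  obtain a b where ab: "a \<in> B" "b \<in> B" "a \<noteq> b" using two_alternatives .
  obtain P where "P \<in> profiles V A" "g P = b" using g_onto ab(2) by auto
  then show False using D ab by (auto simp: decisive_def decisive_for_def)
qed

lemma decisive_singleton_exists: "\<exists>i\<in>V. decisive {i}"
proof -
  have "\<exists>i\<in>S. decisive {i}" if "finite S" "S \<subseteq> V" "decisive S" for S
    using that
  proof (induction S rule: finite_induct)
    case (insert x S)
    then show ?case using decisive_Un_imp[of "{x}" S] by auto
  qed (simp add: not_decisive_empty)
  moreover have "decisive V"
    by (auto simp: decisive_def decisive_for_all_voters)
  ultimately show ?thesis using finite_voters by blast
qed

theorem dictator_exists: "\<exists>i\<in>V. \<forall>P\<in>profiles V A. \<forall>y\<in>B. (g P, y) \<in> P i"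
proof -
  obtain i where i: "i \<in> V" "decisive {i}" using decisive_singleton_exists by blast
  have "(g P, y) \<in> P i" if P: "P \<in> profiles V A" and y: "y \<in> B" for P y
  proof -
    have Pi: "P i \<in> lin_orders A" using profile_in_lin_orders[OF P i(1)] .
    have gP: "g P \<in> B" using g_in_range[OF P] .
    show ?thesis
    proof (cases "y = g P")
      case True
      then show ?thesis using lin_ordersD(2)[OF Pi] gP range_subset by auto
    next
      case False
      then have "(y, g P) \<notin> P i" using i(2) y gP P by (auto simp: decisive_def decisive_for_def)
      then show ?thesis using lin_orders_antisym_total[OF Pi] False y gP range_subset by blast
    qed
  qed
  then show ?thesis using i(1) by blast
qed

end

section \<open>Consular rules with a Marian candidate\<close>

lemma consular_marian_pair:
  assumes "consular_rule V A F" and "P \<in> profiles V A" and "m \<in> F P"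
  shows "F P = {m, the_elem (F P - {m})}" "the_elem (F P - {m}) \<in> A - {m}"
proof -
  have "F P \<subseteq> A" "card (F P) = 2" using assms(1,2) by (auto simp: consular_rule_def)
  moreover obtain z where "F P = {m, z}" "z \<noteq> m"
  proof -
    obtain x y where "F P = {x, y}" "x \<noteq> y" using \<open>card (F P) = 2\<close> card_2_iff by metis
    then show ?thesis using that \<open>m \<in> F P\<close> by auto
  qed
  moreover have "F P - {m} = {z}" using calculation by auto
  ultimately show "F P = {m, the_elem (F P - {m})}" "the_elem (F P - {m}) \<in> A - {m}" by auto
qed

text \<open>
  A voter who ranks \<open>x\<close> above \<open>m\<close> has \<open>x\<close> as her best consul in \<open>{m, x}\<close>,
  and a voter who ranks \<open>x\<close> below \<open>m\<close> has it as her worst one.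
\<close>

lemma second_consul_order:
  assumes r: "r \<in> lin_orders A" and A: "m \<in> A" "x \<in> A" "y \<in> A" "x \<noteq> m" "y \<noteq> m"
    and best: "(best r {m, x}, best r {m, y}) \<in> r"
    and worst: "(worst r {m, x}, worst r {m, y}) \<in> r"
  shows "(x, y) \<in> r"
proof -
  note D = lin_ordersD[OF r]
  show ?thesis
  proof (cases "(m, x) \<in> r")
    case True
    then have "worst r {m, x} = x" using worst_pair[OF r A(2)] by simp
    then show ?thesis
      using worst worst_pair[OF r A(3), of m] worst_pair[OF r A(1), of y] True D(4) D(5)[of y m] A
      by (cases "(m, y) \<in> r") (auto simp: insert_commute)
  next
    case False
    then have "(x, m) \<in> r" using D(5) A by blast
    then have "best r {m, x} = x" using best_pair[OF r A(2)] by (simp add: insert_commute)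
    then show ?thesis
      using best best_pair[OF r A(3), of m] best_pair[OF r A(1), of y] \<open>(x, m) \<in> r\<close> D(3) D(5)[of y m] A
      by (cases "(y, m) \<in> r") (auto simp: insert_commute)
  qed
qed

lemma marian_consul_strategyproof:
  assumes "consular_rule V A F" "SPO V A F" "SPP V A F"
    and m: "m \<in> A" "\<forall>P\<in>profiles V A. m \<in> F P"
    and P: "P \<in> profiles V A" and i: "i \<in> V" and r: "r \<in> lin_orders A"
  shows "(the_elem (F P - {m}), the_elem (F (P(i := r)) - {m})) \<in> P i"
proof -
  have Q: "P(i := r) \<in> profiles V A" using P i r by (rule profiles_update)
  define x where "x = the_elem (F P - {m})"
  define y where "y = the_elem (F (P(i := r)) - {m})"
  note x = consular_marian_pair[OF assms(1) P bspec[OF m(2) P], folded x_def]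
  note y = consular_marian_pair[OF assms(1) Q bspec[OF m(2) Q], folded y_def]
  have "(best (P i) (F P), best (P i) (F (P(i := r)))) \<in> P i"
    using assms(2) P i r unfolding SPO_def by blast
  moreover have "(worst (P i) (F P), worst (P i) (F (P(i := r)))) \<in> P i"
    using assms(3) P i r unfolding SPP_def by blast
  ultimately have "(x, y) \<in> P i"
    using second_consul_order[OF profile_in_lin_orders[OF P i] m(1)] x y by simp
  then show ?thesis unfolding x_def y_def .
qed

lemma marian_second_consul_strategyproof_scf:
  assumes "finite V" "finite A" "card A \<ge> 4" "consular_rule V A F" "SPO V A F" "SPP V A F"
    and "weakly_viable V A F"
    and m: "m \<in> A" "\<forall>P\<in>profiles V A. m \<in> F P"
  shows "strategyproof_scf V A (A - {m}) (\<lambda>P. the_elem (F P - {m}))"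
proof
  note F = consular_marian_pair[OF assms(4) _ bspec[OF m(2)]]
  show "finite V" by fact
  show "A - {m} \<subseteq> A" by blast
  show "card (A - {m}) \<ge> 3" using assms(2,3) m(1) by (simp add: card_Diff_singleton)
  show "the_elem (F P - {m}) \<in> A - {m}" if "P \<in> profiles V A" for P
    using F(2)[OF that that] .
  show "\<exists>P\<in>profiles V A. the_elem (F P - {m}) = b" if b: "b \<in> A - {m}" for b
  proof -
    obtain P where P: "P \<in> profiles V A" "b \<in> F P"
      using \<open>weakly_viable V A F\<close> b by (auto simp: weakly_viable_def)
    define t where "t = the_elem (F P - {m})"
    have "F P = {m, t}" using F(1)[OF P(1) P(1), folded t_def] .
    then have "the_elem (F P - {m}) = b" using P(2) b unfolding t_def[symmetric] by auto
    then show ?thesis using P(1) by blast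
  qed
  show "(the_elem (F P - {m}), the_elem (F (P(i := r)) - {m})) \<in> P i"
    if "P \<in> profiles V A" "i \<in> V" "r \<in> lin_orders A" for P i r
    using marian_consul_strategyproof[OF assms(4-6) m that] .
qed

theorem proposition17:
  fixes V :: "'v set" and A :: "'a set"
    and F :: "('v \<Rightarrow> ('a \<times> 'a) set) \<Rightarrow> 'a set"
  assumes "finite V" and "V \<noteq> {}" and "finite A" and "card A \<ge> 4"
    and "consular_rule V A F"
    and "marian V A F"
    and "SPO V A F" and "SPP V A F"
    and "weakly_viable V A F"
  shows "\<exists>i. weak_dictator V A F i"
proof -
  obtain m where m: "m \<in> A" "\<forall>P\<in>profiles V A. m \<in> F P"
    using \<open>marian V A F\<close> by (auto simp: marian_def)
  define g where "g P = the_elem (F P - {m})" for P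
  interpret strategyproof_scf V A "A - {m}" g
    unfolding g_def using assms(1,3-5,7-9) m by (rule marian_second_consul_strategyproof_scf)
  obtain i where i: "i \<in> V" "\<forall>P\<in>profiles V A. \<forall>y\<in>A - {m}. (g P, y) \<in> P i"
    using dictator_exists by blast
  have "best (P i) A \<in> F P" if P: "P \<in> profiles V A" for P
  proof -
    have "\<forall>y\<in>A - {m}. (g P, y) \<in> P i" using i(2) P by blast
    with g_in_range[OF P] have "best (P i) A \<in> {m, g P}"
      using best_in_insert_if_dominates[OF profile_in_lin_orders[OF P i(1)] assms(3)] by blast
    also have "{m, g P} = F P"
      unfolding g_def by (rule consular_marian_pair(1)[OF assms(5) P bspec[OF m(2) P], symmetric])
    finally show ?thesis .
  qed
  then show ?thesis using i(1) by (auto simp: weak_dictator_def)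
qed

end
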